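(* Assume Hypotheses 1, 2 and 3 (see context). For any $x\in\Gamma$ and any $\mathbf{x}\in\mathcal{C}(\mathbf{0})$, $$\|\Pi(Q(t,x)\mathbf{x})\|\ge\|\Pi(\mathbf{x})\|\exp\Big(\int_0^t\big(\alpha(\Phi(s,x))-\|D_zf(\Phi(s,x))\|\big)\,ds\Big)\quad\text{for all }t\ge0.$$
   Context: System $\dot x=F(x)$ with $F=(f,g)$, i.e. $\dot a=f(a,z)$, $\dot z=g(a,z)$, $(a,z)\in\mathbb{R}^n\times\mathbb{R}^m$, $X=\mathbb{R}^n\times\mathbb{R}^m$, flow $\Phi(t,x)$. Euclidean inner product, norm, operator norm. $\mathcal{L}(x_1,x_2)=\|a_2-a_1\|^2-\|z_2-z_1\|^2$, $\mathcal{C}(x)=\{x'\in X:\mathcal{L}(x',x)\ge0\}$, $\mathbf{0}$ the zero vector of $X$; $\Pi(a,z)=a$, $\Pi_\perp(a,z)=z$; $\mathbb{B}_d(x)=\{(a',z'):\|a'-a\|\le d,\|z'-z\|\le d\}$. $\Gamma\subseteq U$ positively invariant means $\Phi(t,x)$ is defined for all $t\ge0$ for $x\in\Gamma$ and $\Phi(t,\Gamma)\subseteq\Gamma$. Hypothesis 1: $U$ open and convex, and there is $d>0$ with $\mathcal{C}(x)\cap U\subset\mathbb{B}_d(x)$ for all $x\in U$. Hypothesis 2: $f,g$ are $C^1$ on $U$; there exist continuous $\alpha>0$, $\ell\ge0$ on $U$ and $c_1>0$ with, for all $x\in U$: $\langle a',D_af(x)a'\rangle\ge\alpha(x)\|a'\|^2$;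 $\langle z',D_zg(x)z'\rangle\le\ell(x)\|z'\|^2$; $\alpha(x)\ge\ell(x)+\|D_zf(x)\|+\|D_ag(x)\|+c_1$. Hypothesis 3: $\Gamma\subset U$ is positively invariant and $\Pi_\perp(\Gamma)=\Pi_\perp(U)$. For $x\in\Gamma$, $Q(t,x)$ ($t\ge0$) denotes the fundamental matrix solution of the variational equation $\dot{\mathbf{x}}=DF(\Phi(t,x))\mathbf{x}$ with $Q(0,x)=I$. *)

theory Defs
  imports "HOL-Analysis.Analysis"
begin

definition cone_L :: "((real^'n) \<times> (real^'m)) \<Rightarrow> ((real^'n) \<times> (real^'m)) \<Rightarrow> real" where
  "cone_L x1 x2 = (norm (fst x2 - fst x1))\<^sup>2 - (norm (snd x2 - snd x1))\<^sup>2"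

definition cone_C :: "((real^'n) \<times> (real^'m)) \<Rightarrow> ((real^'n) \<times> (real^'m)) set" where
  "cone_C x = {x'. cone_L x' x \<ge> 0}"

definition box_B :: "real \<Rightarrow> ((real^'n) \<times> (real^'m)) \<Rightarrow> ((real^'n) \<times> (real^'m)) set" where
  "box_B d x = {x'. norm (fst x' - fst x) \<le> d \<and> norm (snd x' - snd x) \<le> d}"

end

theory Submission
  imports Defs
begin

(* Along a solution w = (p, q) of a non-autonomous linear system
   p' = A(s)(p, q), q' = B(s)(p, q) whose blocks satisfy
     <a, A(s)(a,0)> >= alpha |a|^2,  <z, B(s)(0,z)> <= ell |z|^2,
     alpha >= ell + beta + gamma   (beta = |A(s)(0,.)|, gamma = |B(s)(.,0)|),
   two differential inequalities hold:
     (|p|^2 - |q|^2)' >= (beta + gamma + 2 ell) (|p|^2 - |q|^2),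
     (|p|^2)' >= 2 alpha |p|^2 - 2 beta |p| |q|.
   A scalar Gronwall-type comparison turns the first into invariance of the
   cone |q| <= |p|; inside the cone the second becomes (|p|^2)' >= 2 (alpha - beta) |p|^2,
   and the same comparison yields |p(t)| >= |p(0)| exp (int_0^t (alpha - beta)). *)

text \<open>Scalar comparison: a differential inequality \<open>u' \<ge> 2 k u\<close> on \<open>[0,t]\<close> forces
  \<open>u t \<ge> u 0 * exp (2 \<integral>\<^sub>0\<^sup>t k)\<close>, because \<open>u * exp (-2 \<integral> k)\<close> is nondecreasing.\<close>

lemma differential_inequality_lower_bound:
  fixes u k u' :: "real \<Rightarrow> real"
  assumes t: "t \<ge> 0"
    and k_cont: "continuous_on {0..t} k"
    and u_deriv: "\<And>s. s \<in> {0..t} \<Longrightarrow> (u has_real_derivative u' s) (at s within {0..t})"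
    and u_ineq: "\<And>s. s \<in> {0..t} \<Longrightarrow> u' s \<ge> 2 * k s * u s"
  shows "u t \<ge> u 0 * exp (2 * integral {0..t} k)"
proof -
  define I where "I s = integral {0..s} k" for s
  define G where "G s = u s * exp (- 2 * I s)" for s
  have I_deriv: "(I has_real_derivative k s) (at s within {0..t})" if "s \<in> {0..t}" for s
    using integral_has_vector_derivative[OF k_cont that] unfolding I_def
    by (simp add: has_real_derivative_iff_has_vector_derivative)
  have G_deriv: "(G has_real_derivative exp (- 2 * I s) * (u' s - 2 * k s * u s)) (at s within {0..t})"
    if "s \<in> {0..t}" for s
    unfolding G_def
    by (rule derivative_eq_intros u_deriv[OF that] I_deriv[OF that] refl | simp add: algebra_simps)+
  have G_cont: "continuous_on {0..t} G"
    unfolding continuous_on_eq_continuous_within using G_deriv by (meson DERIV_continuous)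
  have "G 0 \<le> G t"
  proof (rule DERIV_nonneg_imp_increasing_open[OF t _ G_cont])
    fix s assume "0 < s" "s < t"
    then show "\<exists>y. DERIV G s :> y \<and> 0 \<le> y"
      using G_deriv[of s] u_ineq[of s] at_within_Icc_at[of 0 s t] by auto
  qed
  moreover have "G 0 = u 0" by (simp add: G_def I_def)
  moreover have "u t = G t * exp (2 * I t)" by (simp add: G_def exp_minus field_simps flip: exp_add)
  ultimately show ?thesis unfolding I_def
    by (metis exp_gt_zero less_eq_real_def mult_right_mono)
qed

lemma has_real_derivative_norm_sq:
  fixes w :: "real \<Rightarrow> 'a::real_inner"
  assumes "(w has_vector_derivative W) (at s within S)"
  shows "((\<lambda>s. (norm (w s))\<^sup>2) has_real_derivative 2 * inner (w s) W) (at s within S)"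
proof -
  have d: "(w has_derivative (\<lambda>h. h *\<^sub>R W)) (at s within S)"
    using assms unfolding has_vector_derivative_def .
  show ?thesis unfolding has_field_derivative_def power2_norm_eq_inner
    by (rule has_derivative_eq_rhs[OF has_derivative_inner[OF d d]])
       (auto simp: inner_commute algebra_simps)
qed

lemma has_vector_derivative_fst:
  "(w has_vector_derivative W) F \<Longrightarrow> ((\<lambda>s. fst (w s)) has_vector_derivative fst W) F"
  unfolding has_vector_derivative_def by (drule has_derivative_fst) simp

lemma has_vector_derivative_snd:
  "(w has_vector_derivative W) F \<Longrightarrow> ((\<lambda>s. snd (w s)) has_vector_derivative snd W) F"
  unfolding has_vector_derivative_def by (drule has_derivative_snd) simp

lemma continuous_on_onorm_compose:
  fixes A :: "real \<Rightarrow> 'a::real_normed_vector \<Rightarrow>\<^sub>L 'c::real_normed_vector"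
    and e :: "'b::real_normed_vector \<Rightarrow> 'a"
  assumes "continuous_on S A" and "bounded_linear e"
  shows "continuous_on S (\<lambda>s. onorm (\<lambda>v. A s (e v)))"
proof -
  have "blinfun_apply (A s o\<^sub>L Blinfun e) = (\<lambda>v. A s (e v))" for s
    by (rule ext) (simp add: bounded_linear_Blinfun_apply[OF assms(2)])
  then have "(\<lambda>s. onorm (\<lambda>v. A s (e v))) = (\<lambda>s. norm (A s o\<^sub>L Blinfun e))"
    by (simp add: norm_blinfun.rep_eq)
  moreover have "continuous_on S (\<lambda>s. norm (A s o\<^sub>L Blinfun e))"
    by (intro continuous_intros assms(1))
  ultimately show ?thesis by (simp only:)
qed

lemma bounded_linear_block_left:
  fixes L :: "'a::real_normed_vector \<times> 'b::real_normed_vector \<Rightarrow> 'c::real_normed_vector"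
  assumes "bounded_linear L"
  shows "bounded_linear (\<lambda>a. L (a, 0))"
  by (intro bounded_linear_compose[OF assms] bounded_linear_Pair bounded_linear_zero bounded_linear_ident)

lemma bounded_linear_block_right:
  fixes L :: "'a::real_normed_vector \<times> 'b::real_normed_vector \<Rightarrow> 'c::real_normed_vector"
  assumes "bounded_linear L"
  shows "bounded_linear (\<lambda>z. L (0, z))"
  by (intro bounded_linear_compose[OF assms] bounded_linear_Pair bounded_linear_zero bounded_linear_ident)

lemma inner_block_fst_lower:
  fixes L :: "('a::real_inner \<times> 'b::real_inner) \<Rightarrow>\<^sub>L 'a"
  shows "inner a (L (a, z)) \<ge> inner a (L (a, 0)) - onorm (\<lambda>z. L (0, z)) * norm a * norm z"
proof -
  have "inner a (L (a, z)) = inner a (L (a, 0)) + inner a (L (0, z))"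
    by (metis add_Pair add.right_neutral add_0 blinfun.add_right inner_add_right)
  moreover have "\<bar>inner a (L (0, z))\<bar> \<le> norm a * (onorm (\<lambda>z. L (0, z)) * norm z)"
    using Cauchy_Schwarz_ineq2[of a "L (0, z)"]
      onorm[OF bounded_linear_block_right[OF blinfun.bounded_linear_right], of L z]
    by (meson mult_left_mono norm_ge_zero order_trans)
  ultimately show ?thesis by (simp add: algebra_simps; linarith)
qed

lemma inner_block_snd_upper:
  fixes L :: "('a::real_inner \<times> 'b::real_inner) \<Rightarrow>\<^sub>L 'b"
  shows "inner z (L (a, z)) \<le> inner z (L (0, z)) + onorm (\<lambda>a. L (a, 0)) * norm a * norm z"
proof -
  have "inner z (L (a, z)) = inner z (L (0, z)) + inner z (L (a, 0))"
    by (metis add_Pair add.right_neutral add_0 blinfun.add_right inner_add_right add.commute)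
  moreover have "\<bar>inner z (L (a, 0))\<bar> \<le> norm z * (onorm (\<lambda>a. L (a, 0)) * norm a)"
    using Cauchy_Schwarz_ineq2[of z "L (a, 0)"]
      onorm[OF bounded_linear_block_left[OF blinfun.bounded_linear_right], of L a]
    by (meson mult_left_mono norm_ge_zero order_trans)
  ultimately show ?thesis by (simp add: algebra_simps; linarith)
qed

text \<open>The algebraic heart of cone invariance: under the gap condition the quadratic
  lower bound for \<open>(|p|\<^sup>2 - |q|\<^sup>2)'/2\<close> dominates a multiple of \<open>|p|\<^sup>2 - |q|\<^sup>2\<close>.\<close>

lemma cone_quadratic_estimate:
  fixes al be ga l P R :: real
  assumes "l + be + ga \<le> al" "be \<ge> 0" "ga \<ge> 0"
  shows "(be/2 + ga/2 + l) * (P\<^sup>2 - R\<^sup>2) \<le> al * P\<^sup>2 - be * P * R - (l * R\<^sup>2 + ga * P * R)"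
proof -
  have "al * P\<^sup>2 - be * P * R - (l * R\<^sup>2 + ga * P * R) - (be/2 + ga/2 + l) * (P\<^sup>2 - R\<^sup>2)
      = (al - l - be - ga) * P\<^sup>2 + be/2 * (P - R)\<^sup>2 + ga/2 * (P - R)\<^sup>2"
    by (simp add: power2_eq_square algebra_simps)
  moreover have "(al - l - be - ga) * P\<^sup>2 \<ge> 0" "be/2 * (P - R)\<^sup>2 \<ge> 0" "ga/2 * (P - R)\<^sup>2 \<ge> 0"
    using assms by auto
  ultimately show ?thesis by linarith
qed

locale dominated_splitting_system =
  fixes A :: "real \<Rightarrow> ('a::real_inner \<times> 'b::real_inner) \<Rightarrow>\<^sub>L 'a"
    and B :: "real \<Rightarrow> ('a \<times> 'b) \<Rightarrow>\<^sub>L 'b"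
    and alpha ell :: "real \<Rightarrow> real"
    and w :: "real \<Rightarrow> 'a \<times> 'b"
  assumes A_cont: "continuous_on {0..} A"
    and B_cont: "continuous_on {0..} B"
    and alpha_cont: "continuous_on {0..} alpha"
    and ell_cont: "continuous_on {0..} ell"
    and expanding: "\<And>s a. s \<ge> 0 \<Longrightarrow> alpha s * (norm a)\<^sup>2 \<le> inner a (A s (a, 0))"
    and contracting: "\<And>s z. s \<ge> 0 \<Longrightarrow> inner z (B s (0, z)) \<le> ell s * (norm z)\<^sup>2"
    and gap: "\<And>s. s \<ge> 0 \<Longrightarrow> ell s + onorm (\<lambda>z. A s (0, z)) + onorm (\<lambda>a. B s (a, 0)) \<le> alpha s"
    and solution: "\<And>s. s \<ge> 0 \<Longrightarrow> (w has_vector_derivative (A s (w s), B s (w s))) (at s within {0..})"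
begin

definition beta :: "real \<Rightarrow> real" where "beta s = onorm (\<lambda>z. A s (0, z))"
definition gamma :: "real \<Rightarrow> real" where "gamma s = onorm (\<lambda>a. B s (a, 0))"

lemma beta_nonneg: "beta s \<ge> 0"
  unfolding beta_def by (rule onorm_pos_le[OF bounded_linear_block_right[OF blinfun.bounded_linear_right]])

lemma gamma_nonneg: "gamma s \<ge> 0"
  unfolding gamma_def by (rule onorm_pos_le[OF bounded_linear_block_left[OF blinfun.bounded_linear_right]])

lemma beta_cont: "continuous_on {0..} beta"
  unfolding beta_def
  by (rule continuous_on_onorm_compose[OF A_cont]) (intro bounded_linear_Pair bounded_linear_zero bounded_linear_ident)

lemma gamma_cont: "continuous_on {0..} gamma"
  unfolding gamma_def
  by (rule continuous_on_onorm_compose[OF B_cont]) (intro bounded_linear_Pair bounded_linear_zero bounded_linear_ident)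

lemma fst_norm_sq_deriv:
  assumes "s \<in> {0..t}"
  shows "((\<lambda>r. (norm (fst (w r)))\<^sup>2) has_real_derivative 2 * inner (fst (w s)) (A s (w s)))
           (at s within {0..t})"
  using has_real_derivative_norm_sq[OF has_vector_derivative_fst[OF
      has_vector_derivative_within_subset[OF solution]]] assms by auto

lemma snd_norm_sq_deriv:
  assumes "s \<in> {0..t}"
  shows "((\<lambda>r. (norm (snd (w r)))\<^sup>2) has_real_derivative 2 * inner (snd (w s)) (B s (w s)))
           (at s within {0..t})"
  using has_real_derivative_norm_sq[OF has_vector_derivative_snd[OF
      has_vector_derivative_within_subset[OF solution]]] assms by auto

lemma fst_rate_lower:
  assumes "s \<ge> 0"
  shows "alpha s * (norm (fst (w s)))\<^sup>2 - beta s * norm (fst (w s)) * norm (snd (w s))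
           \<le> inner (fst (w s)) (A s (w s))"
  using inner_block_fst_lower[of "fst (w s)" "A s" "snd (w s)"] expanding[OF assms, of "fst (w s)"]
  unfolding beta_def by simp

lemma snd_rate_upper:
  assumes "s \<ge> 0"
  shows "inner (snd (w s)) (B s (w s))
           \<le> ell s * (norm (snd (w s)))\<^sup>2 + gamma s * norm (fst (w s)) * norm (snd (w s))"
  using inner_block_snd_upper[of "snd (w s)" "B s" "fst (w s)"] contracting[OF assms, of "snd (w s)"]
  unfolding gamma_def by simp

text \<open>Cone invariance: \<open>u = |p|\<^sup>2 - |q|\<^sup>2\<close> satisfies \<open>u' \<ge> 2 k u\<close> with
  \<open>k = beta/2 + gamma/2 + ell\<close>, so its sign is preserved.\<close>

lemma cone_invariant:
  assumes cone0: "norm (snd (w 0)) \<le> norm (fst (w 0))" and t: "t \<ge> 0"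
  shows "norm (snd (w t)) \<le> norm (fst (w t))"
proof -
  define u where "u r = (norm (fst (w r)))\<^sup>2 - (norm (snd (w r)))\<^sup>2" for r
  define k where "k r = beta r / 2 + gamma r / 2 + ell r" for r
  have "u t \<ge> u 0 * exp (2 * integral {0..t} k)"
  proof (rule differential_inequality_lower_bound[OF t])
    show "continuous_on {0..t} k"
      unfolding k_def using beta_cont gamma_cont ell_cont
      by (intro continuous_intros; auto elim: continuous_on_subset)
    fix s assume s: "s \<in> {0..t}"
    show "(u has_real_derivative
            2 * inner (fst (w s)) (A s (w s)) - 2 * inner (snd (w s)) (B s (w s))) (at s within {0..t})"
      unfolding u_def by (intro DERIV_diff fst_norm_sq_deriv snd_norm_sq_deriv s)
    have s0: "s \<ge> 0" using s by simp
    have "k s * u s \<le> alpha s * (norm (fst (w s)))\<^sup>2 - beta s * norm (fst (w s)) * norm (snd (w s))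
        - (ell s * (norm (snd (w s)))\<^sup>2 + gamma s * norm (fst (w s)) * norm (snd (w s)))"
      unfolding k_def u_def
      by (rule cone_quadratic_estimate) (use gap[OF s0] beta_nonneg gamma_nonneg in \<open>auto simp: beta_def gamma_def\<close>)
    then show "2 * k s * u s \<le> 2 * inner (fst (w s)) (A s (w s)) - 2 * inner (snd (w s)) (B s (w s))"
      using fst_rate_lower[OF s0] snd_rate_upper[OF s0] by linarith
  qed
  moreover have "u 0 \<ge> 0"
    unfolding u_def using cone0 by (simp add: power_mono)
  ultimately have "u t \<ge> 0"
    by (metis exp_ge_zero mult_nonneg_nonneg order_trans)
  then show ?thesis
    unfolding u_def by (simp add: abs_le_square_iff[symmetric])
qed

text \<open>Inside the cone \<open>|q| \<le> |p|\<close>, so \<open>(|p|\<^sup>2)' \<ge> 2 (alpha - beta) |p|\<^sup>2\<close>, which integrates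
  to exponential growth of the first component.\<close>

lemma fst_growth:
  assumes cone0: "norm (snd (w 0)) \<le> norm (fst (w 0))" and t: "t \<ge> 0"
  shows "norm (fst (w 0)) * exp (integral {0..t} (\<lambda>s. alpha s - onorm (\<lambda>z. A s (0, z))))
           \<le> norm (fst (w t))"
proof -
  define k where "k s = alpha s - beta s" for s
  have "(norm (fst (w t)))\<^sup>2 \<ge> (norm (fst (w 0)))\<^sup>2 * exp (2 * integral {0..t} k)"
  proof (rule differential_inequality_lower_bound[OF t])
    show "continuous_on {0..t} k"
      unfolding k_def using alpha_cont beta_cont
      by (intro continuous_intros; auto elim: continuous_on_subset)
    fix s assume s: "s \<in> {0..t}"
    show "((\<lambda>r. (norm (fst (w r)))\<^sup>2) has_real_derivative 2 * inner (fst (w s)) (A s (w s)))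
            (at s within {0..t})"
      by (rule fst_norm_sq_deriv[OF s])
    have s0: "s \<ge> 0" using s by simp
    have "beta s * norm (fst (w s)) * norm (snd (w s)) \<le> beta s * norm (fst (w s)) * norm (fst (w s))"
      using cone_invariant[OF cone0 s0] beta_nonneg by (intro mult_left_mono) auto
    then show "2 * k s * (norm (fst (w s)))\<^sup>2 \<le> 2 * inner (fst (w s)) (A s (w s))"
      using fst_rate_lower[OF s0] unfolding k_def by (simp add: power2_eq_square algebra_simps)
  qed
  also have "exp (2 * integral {0..t} k) = (exp (integral {0..t} k))\<^sup>2"
    by (simp flip: exp_add add: power2_eq_square)
  finally have "(norm (fst (w 0)) * exp (integral {0..t} k))\<^sup>2 \<le> (norm (fst (w t)))\<^sup>2"
    by (simp add: power_mult_distrib)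
  then show ?thesis
    unfolding k_def beta_def by (rule power2_le_imp_le) simp
qed

end

lemma cone_C_zero_iff: "v \<in> cone_C 0 \<longleftrightarrow> norm (snd v) \<le> norm (fst v)"
  by (simp add: cone_C_def cone_L_def abs_le_square_iff[symmetric])

text \<open>Lemma 2.5: along an orbit in \<open>\<Gamma>\<close> the variational equation is a dominated
  splitting system (only \<open>c1 \<ge> 0\<close> is needed from the gap condition), and
  \<open>v \<in> cone_C 0\<close> is exactly the cone condition at time 0.\<close>

theorem lemma2p5:
  fixes f :: "(real^'n) \<times> (real^'m) \<Rightarrow> (real^'n)"
    and g :: "(real^'n) \<times> (real^'m) \<Rightarrow> (real^'m)"
    and Df :: "(real^'n) \<times> (real^'m) \<Rightarrow> ((real^'n) \<times> (real^'m)) \<Rightarrow>\<^sub>L (real^'n)"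
    and Dg :: "(real^'n) \<times> (real^'m) \<Rightarrow> ((real^'n) \<times> (real^'m)) \<Rightarrow>\<^sub>L (real^'m)"
    and U \<Gamma> :: "((real^'n) \<times> (real^'m)) set"
    and d c1 :: real
    and \<alpha> ell :: "(real^'n) \<times> (real^'m) \<Rightarrow> real"
    and \<Phi> :: "real \<Rightarrow> (real^'n) \<times> (real^'m) \<Rightarrow> (real^'n) \<times> (real^'m)"
    and Q :: "real \<Rightarrow> (real^'n) \<times> (real^'m) \<Rightarrow> (real^'n) \<times> (real^'m) \<Rightarrow> (real^'n) \<times> (real^'m)"
  assumes H1_open: "open U"
    and H1_convex: "convex U"
    and H1_d: "d > 0"
    and H1_cone: "\<forall>x\<in>U. cone_C x \<inter> U \<subseteq> box_B d x"
    and H2_f_deriv: "\<forall>x\<in>U. (f has_derivative blinfun_apply (Df x)) (at x)"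
    and H2_g_deriv: "\<forall>x\<in>U. (g has_derivative blinfun_apply (Dg x)) (at x)"
    and H2_Df_cont: "continuous_on U Df"
    and H2_Dg_cont: "continuous_on U Dg"
    and H2_alpha_cont: "continuous_on U \<alpha>"
    and H2_ell_cont: "continuous_on U ell"
    and H2_alpha_pos: "\<forall>x\<in>U. \<alpha> x > 0"
    and H2_ell_nonneg: "\<forall>x\<in>U. ell x \<ge> 0"
    and H2_c1: "c1 > 0"
    and H2_Daf: "\<forall>x\<in>U. \<forall>a'. inner a' (Df x (a', 0)) \<ge> \<alpha> x * (norm a')\<^sup>2"
    and H2_Dzg: "\<forall>x\<in>U. \<forall>z'. inner z' (Dg x (0, z')) \<le> ell x * (norm z')\<^sup>2"
    and H2_gap: "\<forall>x\<in>U. \<alpha> x \<ge> ell x + onorm (\<lambda>z'. Df x (0, z')) + onorm (\<lambda>a'. Dg x (a', 0)) + c1"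
    and flow: "\<forall>x\<in>\<Gamma>. \<Phi> 0 x = x \<and>
                 (\<forall>t\<ge>0. ((\<lambda>s. \<Phi> s x) has_vector_derivative (f (\<Phi> t x), g (\<Phi> t x))) (at t within {0..}))"
    and H3_sub: "\<Gamma> \<subseteq> U"
    and H3_invariant: "\<forall>x\<in>\<Gamma>. \<forall>t\<ge>0. \<Phi> t x \<in> \<Gamma>"
    and H3_proj: "snd ` \<Gamma> = snd ` U"
    and Q_init: "\<forall>x\<in>\<Gamma>. \<forall>v. Q 0 x v = v"
    and Q_var: "\<forall>x\<in>\<Gamma>. \<forall>v. \<forall>t\<ge>0. ((\<lambda>s. Q s x v) has_vector_derivative
                  (Df (\<Phi> t x) (Q t x v), Dg (\<Phi> t x) (Q t x v))) (at t within {0..})"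
  shows "\<forall>x\<in>\<Gamma>. \<forall>v\<in>cone_C 0. \<forall>t\<ge>0.
           norm (fst (Q t x v)) \<ge> norm (fst v) *
             exp (integral {0..t} (\<lambda>s. \<alpha> (\<Phi> s x) - onorm (\<lambda>z'. Df (\<Phi> s x) (0, z'))))"
proof (intro ballI allI impI)
  fix x v :: "(real^'n) \<times> (real^'m)" and t :: real
  assume x: "x \<in> \<Gamma>" and v: "v \<in> cone_C 0" and t: "t \<ge> 0"
  have orbit_in_U: "\<Phi> s x \<in> U" if "s \<ge> 0" for s
    using H3_invariant H3_sub x that by blast
  have orbit_cont: "continuous_on {0..} (\<lambda>s. \<Phi> s x)"
    unfolding continuous_on_eq_continuous_within
    using flow x by (blast intro: has_vector_derivative_continuous)
  have along_orbit: "continuous_on {0..} (\<lambda>s. h (\<Phi> s x))" if "continuous_on U h"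
    for h :: "(real^'n) \<times> (real^'m) \<Rightarrow> 'c::topological_space"
    using continuous_on_compose2[OF that orbit_cont] orbit_in_U by auto
  interpret dominated_splitting_system "\<lambda>s. Df (\<Phi> s x)" "\<lambda>s. Dg (\<Phi> s x)"
      "\<lambda>s. \<alpha> (\<Phi> s x)" "\<lambda>s. ell (\<Phi> s x)" "\<lambda>s. Q s x v"
  proof
    fix s :: real assume s: "s \<ge> 0"
    show "ell (\<Phi> s x) + onorm (\<lambda>z. Df (\<Phi> s x) (0, z)) + onorm (\<lambda>a. Dg (\<Phi> s x) (a, 0)) \<le> \<alpha> (\<Phi> s x)"
      using H2_gap H2_c1 orbit_in_U[OF s] by fastforce
    show "((\<lambda>s. Q s x v) has_vector_derivative (Df (\<Phi> s x) (Q s x v), Dg (\<Phi> s x) (Q s x v)))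
        (at s within {0..})"
      using Q_var x s by blast
  qed (use along_orbit H2_Df_cont H2_Dg_cont H2_alpha_cont H2_ell_cont H2_Daf H2_Dzg orbit_in_U
       in auto)
  have "Q 0 x v = v"
    using Q_init x by blast
  moreover from this have "norm (snd (Q 0 x v)) \<le> norm (fst (Q 0 x v))"
    using v by (simp add: cone_C_zero_iff)
  ultimately show "norm (fst v) *
      exp (integral {0..t} (\<lambda>s. \<alpha> (\<Phi> s x) - onorm (\<lambda>z'. Df (\<Phi> s x) (0, z')))) \<le> norm (fst (Q t x v))"
    using fst_growth[of t] t by simp
qed

end
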